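(* Let $N\ge2$, $\sigma=(\sigma_1,\dots,\sigma_N)'$ with $\sigma_i>0$. Let $R$ be the $(N-1)\times(N-1)$ tridiagonal matrix with $R_{ii}=1$, $R_{i,i+1}=R_{i+1,i}=-1/2$ (other entries $0$), let $A$ be the $(N-1)\times(N-1)$ tridiagonal matrix with $A_{ii}=\sigma_i^2+\sigma_{i+1}^2$, $A_{i,i+1}=A_{i+1,i}=-\sigma_{i+1}^2$ (other entries $0$), and let $\rho_{kl}$ denote the entries of $R^{-1}$. For $1\le k\le l\le N-1$ set $$c_{k,l}(\sigma)=\mathrm{tr}(R^{-1}A)-2\frac{(R^{-1}AR^{-1})_{kl}}{\rho_{kl}}.$$ Then: (i) $c_{k,l}(\sigma)\ge0$ for $2\le k\le l\le N-2$; (ii) $c_{1,l}(\sigma)=c_l(\sigma)$ for $1\le l\le N-1$; (iii) $c_{k,N-1}(\sigma)=c_{N-k}(\sigma^{\leftarrow})$ for $1\le k\le N-1$.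
   Context: For $\alpha=(\alpha_1,\dots,\alpha_M)'\in\mathbb{R}^M$ ($M\ge2$) and $l=1,\dots,M-1$: $c_l(\alpha)=-\frac{2(M-1)}{M}\alpha_1^2+\frac{2(M+1)}{M}\sum_{p=2}^l\alpha_p^2+\frac{2(M-1)(M-l)-4l}{(M-l)M}\sum_{p=l+1}^M\alpha_p^2$, and $\alpha^{\leftarrow}=(\alpha_M,\dots,\alpha_1)'$. Here $M=N$. (All entries $\rho_{kl}$ of $R^{-1}$ are positive.) *)

theory Defs
  imports "Jordan_Normal_Form.Gauss_Jordan_Elimination"
begin

(* Conventions: vectors sigma, alpha are functions nat => real indexed 1..N (resp. 1..M).
   Matrices are Jordan_Normal_Form matrices with 0-based indices; the paper's entry (i,j)
   (1-based) is the JNF entry (i-1, j-1). *)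

definition Rmat :: "nat \<Rightarrow> real mat" where
  "Rmat N = mat (N - 1) (N - 1)
     (\<lambda>(i, j). if i = j then 1 else if i + 1 = j \<or> j + 1 = i then - 1 / 2 else 0)"

definition Amat :: "nat \<Rightarrow> (nat \<Rightarrow> real) \<Rightarrow> real mat" where
  "Amat N \<sigma> = mat (N - 1) (N - 1)
     (\<lambda>(i, j). if i = j then (\<sigma> (i + 1))\<^sup>2 + (\<sigma> (i + 2))\<^sup>2
              else if i + 1 = j then - (\<sigma> (i + 2))\<^sup>2
              else if j + 1 = i then - (\<sigma> (j + 2))\<^sup>2
              else 0)"

definition mat_trace :: "real mat \<Rightarrow> real" where
  "mat_trace M = (\<Sum>i<dim_row M. M $$ (i, i))"

definition Rinv :: "nat \<Rightarrow> real mat" where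
  "Rinv N = the (mat_inverse (Rmat N))"

definition rho :: "nat \<Rightarrow> nat \<Rightarrow> nat \<Rightarrow> real" where
  "rho N k l = Rinv N $$ (k - 1, l - 1)"

definition ckl :: "nat \<Rightarrow> nat \<Rightarrow> nat \<Rightarrow> (nat \<Rightarrow> real) \<Rightarrow> real" where
  "ckl N k l \<sigma> = mat_trace (Rinv N * Amat N \<sigma>)
     - 2 * (Rinv N * Amat N \<sigma> * Rinv N) $$ (k - 1, l - 1) / rho N k l"

definition cl :: "nat \<Rightarrow> nat \<Rightarrow> (nat \<Rightarrow> real) \<Rightarrow> real" where
  "cl M l \<alpha> = - (2 * (real M - 1) / real M) * (\<alpha> 1)\<^sup>2
     + (2 * (real M + 1) / real M) * (\<Sum>p = 2..l. (\<alpha> p)\<^sup>2)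
     + ((2 * (real M - 1) * (real M - real l) - 4 * real l) / ((real M - real l) * real M))
         * (\<Sum>p = l + 1..M. (\<alpha> p)\<^sup>2)"

definition rev_vec :: "nat \<Rightarrow> (nat \<Rightarrow> real) \<Rightarrow> (nat \<Rightarrow> real)" where
  "rev_vec M \<alpha> = (\<lambda>p. \<alpha> (M + 1 - p))"

end

theory Submission
  imports Defs "Jordan_Normal_Form.Determinant"
begin

text \<open>R is the discrete Laplacian of the path 0, ..., N with zero boundary values, so its inverse is
the Green's function 2 min(a, b) (N - max(a, b)) / N. The matrix A factors as D' diag(\<sigma>^2) D with
D the N \<times> (N - 1) difference matrix, hence the entries of R^-1 A R^-1 and the trace of R^-1 A
are sums over t of \<sigma>_t^2 times products of the jumps of the Green's function across the
edge t. The jump of green(a, -) across the edge t is -2 (N - a) / N for t \<le> a and 2 a / N for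
t > a, so c_{k,l} is an explicit combination of the partial sums of \<sigma>_t^2 over t \<le> k,
k < t \<le> l and l < t, from which all three claims are read off.\<close>

lemma the_mat_inverse_eqI:
  fixes A B :: "'a :: field mat"
  assumes A: "A \<in> carrier_mat n n" and B: "B \<in> carrier_mat n n" and AB: "A * B = 1\<^sub>m n"
  shows "the (mat_inverse A) = B"
proof -
  have "det A \<noteq> 0" using det_mult[OF A B] AB by auto
  then have "A \<in> Units (ring_mat TYPE('a) n undefined)" by (rule det_non_zero_imp_unit[OF A])
  then obtain C where C: "mat_inverse A = Some C" using mat_inverse(1)[OF A] by fastforce
  then have CA: "C * A = 1\<^sub>m n" and Cc: "C \<in> carrier_mat n n" using mat_inverse(2)[OF A] by auto
  have "C = C * (A * B)" using AB Cc by simp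
  also have "\<dots> = (C * A) * B" using A B Cc by (simp add: assoc_mult_mat)
  also have "\<dots> = B" using CA B by simp
  finally show ?thesis using C by simp
qed

text \<open>The Green's function of R with zero boundary values at 0 and N, in the paper's 1-based indices.\<close>

definition green :: "nat \<Rightarrow> nat \<Rightarrow> nat \<Rightarrow> real" where
  "green N a b = 2 * real (min a b) * (real N - real (max a b)) / real N"

lemma green_sym: "green N a b = green N b a"
  unfolding green_def by (simp add: min.commute max.commute)

lemma green_0 [simp]: "green N 0 b = 0"
  unfolding green_def by simp

lemma green_0_right [simp]: "green N a 0 = 0"
  by (simp add: green_sym)

lemma green_self_left [simp]: "b \<le> N \<Longrightarrow> green N N b = 0"
  unfolding green_def by (simp add: max_def)

lemma green_self_right [simp]: "a \<le> N \<Longrightarrow> green N a N = 0"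
  by (simp add: green_sym)

lemma green_second_difference:
  assumes "0 < N" "1 \<le> a"
  shows "green N a b - green N (a - 1) b / 2 - green N (a + 1) b / 2 = (if a = b then 1 else 0)"
proof -
  have a: "real (a - 1) = real a - 1" using assms by simp
  consider "a < b" | "a = b" | "b < a" by linarith
  then show ?thesis
  proof cases
    case 1
    then have "min a b = a" "min (a - 1) b = a - 1" "min (a + 1) b = a + 1"
      "max a b = b" "max (a - 1) b = b" "max (a + 1) b = b" by auto
    then show ?thesis using 1 assms a unfolding green_def by (simp add: field_simps)
  next
    case 2
    then have "min a b = a" "min (a - 1) b = a - 1" "min (a + 1) b = b"
      "max a b = b" "max (a - 1) b = b" "max (a + 1) b = a + 1" by auto
    then show ?thesis using 2 assms a unfolding green_def by (simp add: field_simps)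
  next
    case 3
    then have "min a b = b" "min (a - 1) b = b" "min (a + 1) b = b"
      "max a b = a" "max (a - 1) b = a - 1" "max (a + 1) b = a + 1" by auto
    then show ?thesis using 3 assms a unfolding green_def by (simp add: field_simps)
  qed
qed

lemma Rmat_row_sum:
  assumes "i < N - 1" "g 0 = 0" "g N = 0"
  shows "(\<Sum>m<N - 1. Rmat N $$ (i, m) * g (m + 1)) = g (i + 1) - g i / 2 - g (i + 2) / 2"
proof -
  have centre: "(\<Sum>m<N - 1. if m = i then g (m + 1) else 0) = g (i + 1)"
    using assms by simp
  have below: "(\<Sum>m<N - 1. if m + 1 = i then g (m + 1) else 0) = g i"
    using assms by (cases i) auto
  have above: "(\<Sum>m<N - 1. if m = i + 1 then g (m + 1) else 0) = g (i + 2)"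
    using assms by (cases "i + 2 = N") auto
  have "(\<Sum>m<N - 1. Rmat N $$ (i, m) * g (m + 1))
      = (\<Sum>m<N - 1. if m = i then g (m + 1) else 0)
        - (\<Sum>m<N - 1. if m + 1 = i then g (m + 1) else 0) / 2
        - (\<Sum>m<N - 1. if m = i + 1 then g (m + 1) else 0) / 2"
    unfolding sum_subtractf[symmetric] sum_divide_distrib
    using assms(1) by (intro sum.cong refl) (auto simp: Rmat_def)
  then show ?thesis
    unfolding centre below above .
qed

definition green_mat :: "nat \<Rightarrow> real mat" where
  "green_mat N = mat (N - 1) (N - 1) (\<lambda>(i, j). green N (i + 1) (j + 1))"

lemma green_mat_carrier: "green_mat N \<in> carrier_mat (N - 1) (N - 1)"
  by (simp add: green_mat_def)

lemma green_mat_index: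
  "i < N - 1 \<Longrightarrow> j < N - 1 \<Longrightarrow> green_mat N $$ (i, j) = green N (i + 1) (j + 1)"
  by (simp add: green_mat_def)

lemma Rmat_mult_green_mat: "Rmat N * green_mat N = 1\<^sub>m (N - 1)"
proof (rule eq_matI)
  fix i j assume "i < dim_row (1\<^sub>m (N - 1) :: real mat)" "j < dim_col (1\<^sub>m (N - 1) :: real mat)"
  then have ij: "i < N - 1" "j < N - 1" by simp_all
  then have "(Rmat N * green_mat N) $$ (i, j) = (\<Sum>m<N - 1. Rmat N $$ (i, m) * green N (m + 1) (j + 1))"
    by (simp add: Rmat_def green_mat_def scalar_prod_def lessThan_atLeast0)
  also have "\<dots> = green N (i + 1) (j + 1) - green N i (j + 1) / 2 - green N (i + 2) (j + 1) / 2"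
    using ij by (intro Rmat_row_sum) auto
  also have "\<dots> = (if i = j then 1 else 0)"
    using green_second_difference[of N "i + 1" "j + 1"] ij by simp
  finally show "(Rmat N * green_mat N) $$ (i, j) = 1\<^sub>m (N - 1) $$ (i, j)" using ij by simp
qed (simp_all add: Rmat_def green_mat_def)

lemma Rinv_eq_green_mat: "Rinv N = green_mat N"
  unfolding Rinv_def
  by (rule the_mat_inverse_eqI[OF _ green_mat_carrier Rmat_mult_green_mat]) (simp add: Rmat_def)

text \<open>Entry (t, i) of the difference matrix D with A = D' diag(\<sigma>^2) D; the row index t is 1-based and
the column index i is 0-based, as in \<open>Amat\<close>.\<close>

definition incidence :: "nat \<Rightarrow> nat \<Rightarrow> real" where
  "incidence t i = (if t = i + 2 then 1 else 0) - (if t = i + 1 then 1 else 0)"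

lemma Amat_eq_sum_incidence:
  assumes "i < N - 1" "j < N - 1"
  shows "Amat N \<sigma> $$ (i, j) = (\<Sum>t\<in>{1..N}. (\<sigma> t)\<^sup>2 * incidence t i * incidence t j)"
proof -
  have "(\<Sum>t\<in>{1..N}. (\<sigma> t)\<^sup>2 * incidence t i * incidence t j)
      = (\<Sum>t\<in>{i + 1, i + 2}. (\<sigma> t)\<^sup>2 * incidence t i * incidence t j)"
    using assms by (intro sum.mono_neutral_right) (auto simp: incidence_def)
  also have "\<dots> = Amat N \<sigma> $$ (i, j)"
    using assms by (auto simp: incidence_def Amat_def)
  finally show ?thesis by simp
qed

lemma sum_mult_incidence:
  assumes "1 \<le> t" "t \<le> N" "g 0 = 0" "g N = 0"
  shows "(\<Sum>i<N - 1. g (i + 1) * incidence t i) = g (t - 1) - g t"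
proof -
  have "(\<Sum>i<N - 1. g (i + 1) * incidence t i)
      = (\<Sum>i<N - 1. if i = t - 2 \<and> 2 \<le> t then g (i + 1) else 0)
        - (\<Sum>i<N - 1. if i = t - 1 then g (i + 1) else 0)"
    unfolding sum_subtractf[symmetric] using assms(1)
    by (intro sum.cong refl) (auto simp: incidence_def)
  also have "\<dots> = g (t - 1) - g t"
    using assms by (cases "t = 1"; cases "t = N") (auto simp: numeral_2_eq_2 Suc_diff_Suc)
  finally show ?thesis .
qed

text \<open>Entry (a, t) of R^-1 D'.\<close>

definition green_jump :: "nat \<Rightarrow> nat \<Rightarrow> nat \<Rightarrow> real" where
  "green_jump N a t = green N a (t - 1) - green N a t"

lemma green_jump_eq:
  assumes "1 \<le> t"
  shows "green_jump N a t = (if t \<le> a then - 2 * (real N - real a) / real N else 2 * real a / real N)"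
proof (cases "t \<le> a")
  case True
  then have "min a (t - 1) = t - 1" "max a (t - 1) = a" "min a t = t" "max a t = a" by auto
  then show ?thesis
    using True assms unfolding green_jump_def green_def
    by (simp add: of_nat_diff divide_simps algebra_simps)
next
  case False
  then have "min a (t - 1) = a" "max a (t - 1) = t - 1" "min a t = a" "max a t = t" by auto
  then show ?thesis
    using False assms unfolding green_jump_def green_def
    by (simp add: of_nat_diff divide_simps algebra_simps)
qed

lemma sum_sum_mult_sum_outer_products:
  fixes a :: "'i \<Rightarrow> 'm \<Rightarrow> 'a :: comm_semiring_1"
  shows "(\<Sum>i\<in>I. \<Sum>m\<in>M. a i m * (\<Sum>t\<in>T. f t * u t i * v t m))
       = (\<Sum>t\<in>T. f t * (\<Sum>i\<in>I. \<Sum>m\<in>M. u t i * a i m * v t m))"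
proof -
  have "(\<Sum>i\<in>I. \<Sum>m\<in>M. a i m * (\<Sum>t\<in>T. f t * u t i * v t m))
      = (\<Sum>i\<in>I. \<Sum>t\<in>T. \<Sum>m\<in>M. f t * (u t i * a i m * v t m))"
    by (simp add: sum_distrib_left mult_ac sum.swap[of _ M])
  also have "\<dots> = (\<Sum>t\<in>T. f t * (\<Sum>i\<in>I. \<Sum>m\<in>M. u t i * a i m * v t m))"
    by (subst sum.swap) (simp add: sum_distrib_left)
  finally show ?thesis .
qed

lemma sum_green_mult_incidence:
  assumes "a \<le> N" "1 \<le> t" "t \<le> N"
  shows "(\<Sum>i<N - 1. green N a (i + 1) * incidence t i) = green_jump N a t"
  unfolding green_jump_def using assms by (intro sum_mult_incidence) auto

lemma green_Amat_green_index:
  assumes "k < N - 1" "l < N - 1"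
  shows "(green_mat N * Amat N \<sigma> * green_mat N) $$ (k, l)
       = (\<Sum>t\<in>{1..N}. (\<sigma> t)\<^sup>2 * green_jump N (k + 1) t * green_jump N (l + 1) t)"
proof -
  let ?G = "green_mat N" and ?A = "Amat N \<sigma>"
  have "(?G * ?A * ?G) $$ (k, l) = (\<Sum>m<N - 1. (\<Sum>i<N - 1. ?G $$ (k, i) * ?A $$ (i, m)) * ?G $$ (m, l))"
    using assms by (simp add: green_mat_def Amat_def scalar_prod_def lessThan_atLeast0)
  also have "\<dots> = (\<Sum>m<N - 1. \<Sum>i<N - 1. (?G $$ (k, i) * ?G $$ (m, l)) * ?A $$ (i, m))"
    by (simp add: sum_distrib_left sum_distrib_right mult_ac)
  also have "\<dots> = (\<Sum>i<N - 1. \<Sum>m<N - 1. (?G $$ (k, i) * ?G $$ (m, l)) * ?A $$ (i, m))"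
    by (rule sum.swap)
  also have "\<dots> = (\<Sum>i<N - 1. \<Sum>m<N - 1. (?G $$ (k, i) * ?G $$ (m, l))
                      * (\<Sum>t\<in>{1..N}. (\<sigma> t)\<^sup>2 * incidence t i * incidence t m))"
    by (intro sum.cong refl) (simp add: Amat_eq_sum_incidence)
  also have "\<dots> = (\<Sum>t\<in>{1..N}. (\<sigma> t)\<^sup>2
                      * (\<Sum>i<N - 1. \<Sum>m<N - 1. incidence t i * (?G $$ (k, i) * ?G $$ (m, l)) * incidence t m))"
    by (rule sum_sum_mult_sum_outer_products)
  also have "\<dots> = (\<Sum>t\<in>{1..N}. (\<sigma> t)\<^sup>2
                      * ((\<Sum>i<N - 1. green N (k + 1) (i + 1) * incidence t i)
                         * (\<Sum>m<N - 1. green N (l + 1) (m + 1) * incidence t m)))"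
  proof (intro sum.cong refl)
    fix t
    have "(\<Sum>i<N - 1. \<Sum>m<N - 1. incidence t i * (?G $$ (k, i) * ?G $$ (m, l)) * incidence t m)
        = (\<Sum>i<N - 1. \<Sum>m<N - 1. green N (k + 1) (i + 1) * incidence t i
                                      * (green N (l + 1) (m + 1) * incidence t m))"
      using assms by (intro sum.cong refl) (simp add: green_mat_index green_sym)
    then show "(\<sigma> t)\<^sup>2 * (\<Sum>i<N - 1. \<Sum>m<N - 1. incidence t i * (?G $$ (k, i) * ?G $$ (m, l)) * incidence t m)
        = (\<sigma> t)\<^sup>2 * ((\<Sum>i<N - 1. green N (k + 1) (i + 1) * incidence t i)
                         * (\<Sum>m<N - 1. green N (l + 1) (m + 1) * incidence t m))"
      by (simp add: sum_product)
  qed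
  also have "\<dots> = (\<Sum>t\<in>{1..N}. (\<sigma> t)\<^sup>2 * green_jump N (k + 1) t * green_jump N (l + 1) t)"
  proof (intro sum.cong refl)
    fix t assume "t \<in> {1..N}"
    then show "(\<sigma> t)\<^sup>2 * ((\<Sum>i<N - 1. green N (k + 1) (i + 1) * incidence t i)
                         * (\<Sum>m<N - 1. green N (l + 1) (m + 1) * incidence t m))
             = (\<sigma> t)\<^sup>2 * green_jump N (k + 1) t * green_jump N (l + 1) t"
      using assms sum_green_mult_incidence[of "k + 1" N t] sum_green_mult_incidence[of "l + 1" N t]
      by simp
  qed
  finally show ?thesis .
qed

lemma mat_trace_green_Amat:
  "mat_trace (green_mat N * Amat N \<sigma>) = 2 * (real N - 1) / real N * (\<Sum>t\<in>{1..N}. (\<sigma> t)\<^sup>2)"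
proof -
  let ?G = "green_mat N" and ?A = "Amat N \<sigma>"
  have "mat_trace (?G * ?A) = (\<Sum>i<N - 1. \<Sum>m<N - 1. ?G $$ (i, m) * ?A $$ (m, i))"
    by (simp add: mat_trace_def green_mat_def Amat_def scalar_prod_def lessThan_atLeast0)
  also have "\<dots> = (\<Sum>i<N - 1. \<Sum>m<N - 1. ?G $$ (i, m)
                      * (\<Sum>t\<in>{1..N}. (\<sigma> t)\<^sup>2 * incidence t i * incidence t m))"
    by (intro sum.cong refl) (simp add: Amat_eq_sum_incidence mult_ac)
  also have "\<dots> = (\<Sum>t\<in>{1..N}. (\<sigma> t)\<^sup>2
                      * (\<Sum>i<N - 1. green_jump N (i + 1) t * incidence t i))"
  proof (unfold sum_sum_mult_sum_outer_products, intro sum.cong refl arg_cong2[where f = "(*)"])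
    fix t i assume "t \<in> {1..N}" "i \<in> {..<N - 1}"
    then have "(\<Sum>m<N - 1. ?G $$ (i, m) * incidence t m)
             = (\<Sum>m<N - 1. green N (i + 1) (m + 1) * incidence t m)"
      by (intro sum.cong refl) (simp add: green_mat_index)
    also have "\<dots> = green_jump N (i + 1) t"
      using \<open>t \<in> {1..N}\<close> \<open>i \<in> {..<N - 1}\<close> by (intro sum_green_mult_incidence) auto
    finally have "(\<Sum>m<N - 1. ?G $$ (i, m) * incidence t m) = green_jump N (i + 1) t" .
    moreover have "(\<Sum>m<N - 1. incidence t i * ?G $$ (i, m) * incidence t m)
                 = (\<Sum>m<N - 1. ?G $$ (i, m) * incidence t m) * incidence t i"
      by (simp add: sum_distrib_left sum_distrib_right mult_ac)
    ultimately show "(\<Sum>m<N - 1. incidence t i * ?G $$ (i, m) * incidence t m)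
             = green_jump N (i + 1) t * incidence t i"
      by simp
  qed
  also have "\<dots> = (\<Sum>t\<in>{1..N}. (\<sigma> t)\<^sup>2 * (green_jump N (t - 1) t - green_jump N t t))"
    by (intro sum.cong refl arg_cong2[where f = "(*)"] sum_mult_incidence)
       (auto simp: green_jump_def)
  also have "\<dots> = (\<Sum>t\<in>{1..N}. (\<sigma> t)\<^sup>2 * (2 * (real N - 1) / real N))"
  proof (intro sum.cong refl)
    fix t assume t: "t \<in> {1..N}"
    have "\<not> t \<le> t - 1" using t by auto
    then have left: "green_jump N (t - 1) t = 2 * real (t - 1) / real N"
      and self: "green_jump N t t = - 2 * (real N - real t) / real N"
      using t green_jump_eq[of t N "t - 1"] green_jump_eq[of t N t] by simp_all
    show "(\<sigma> t)\<^sup>2 * (green_jump N (t - 1) t - green_jump N t t)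
        = (\<sigma> t)\<^sup>2 * (2 * (real N - 1) / real N)"
      unfolding left self using t by (simp add: of_nat_diff divide_simps algebra_simps)
  qed
  also have "\<dots> = 2 * (real N - 1) / real N * (\<Sum>t\<in>{1..N}. (\<sigma> t)\<^sup>2)"
    by (simp only: sum_distrib_right mult.commute)
  finally show ?thesis .
qed

lemma sum_atLeastAtMost_split3:
  fixes f :: "nat \<Rightarrow> 'a :: comm_monoid_add"
  assumes "k \<le> l" "l \<le> N"
  shows "sum f {1..N} = sum f {1..k} + sum f {k + 1..l} + sum f {l + 1..N}"
proof -
  have "sum f {1..l + (N - l)} = sum f {1..l} + sum f {l + 1..l + (N - l)}"
    using assms by (intro sum.ub_add_nat) auto
  moreover have "sum f {1..k + (l - k)} = sum f {1..k} + sum f {k + 1..k + (l - k)}"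
    using assms by (intro sum.ub_add_nat) auto
  ultimately show ?thesis using assms by simp
qed

lemma ckl_eq:
  assumes "1 \<le> k" "k \<le> l" "l < N"
  shows "ckl N k l \<sigma>
       = 2 / real N * ((real N - 1) - 2 * (real N - real k) / real k) * (\<Sum>t\<in>{1..k}. (\<sigma> t)\<^sup>2)
         + 2 * (real N + 1) / real N * (\<Sum>t\<in>{k + 1..l}. (\<sigma> t)\<^sup>2)
         + 2 / real N * ((real N - 1) - 2 * real l / (real N - real l)) * (\<Sum>t\<in>{l + 1..N}. (\<sigma> t)\<^sup>2)"
proof -
  define S1 where "S1 = (\<Sum>t\<in>{1..k}. (\<sigma> t)\<^sup>2)"
  define S2 where "S2 = (\<Sum>t\<in>{k + 1..l}. (\<sigma> t)\<^sup>2)"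
  define S3 where "S3 = (\<Sum>t\<in>{l + 1..N}. (\<sigma> t)\<^sup>2)"
  let ?f = "\<lambda>t. (\<sigma> t)\<^sup>2 * green_jump N k t * green_jump N l t"
  have split: "sum f {1..N} = sum f {1..k} + sum f {k + 1..l} + sum f {l + 1..N}" for f :: "nat \<Rightarrow> real"
    using assms by (intro sum_atLeastAtMost_split3) auto
  have trace: "mat_trace (Rinv N * Amat N \<sigma>) = 2 * (real N - 1) / real N * (S1 + S2 + S3)"
    unfolding Rinv_eq_green_mat mat_trace_green_Amat split S1_def S2_def S3_def ..
  have rho: "rho N k l = 2 * real k * (real N - real l) / real N"
    using assms by (simp add: rho_def Rinv_eq_green_mat green_mat_index green_def)
  have "sum ?f {1..k} = 4 * (real N - real k) * (real N - real l) / (real N)\<^sup>2 * S1"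
    unfolding S1_def sum_distrib_left
    by (intro sum.cong refl) (use assms in \<open>auto simp: green_jump_eq power2_eq_square field_simps\<close>)
  moreover have "sum ?f {k + 1..l} = - 4 * real k * (real N - real l) / (real N)\<^sup>2 * S2"
    unfolding S2_def sum_distrib_left
    by (intro sum.cong refl) (use assms in \<open>auto simp: green_jump_eq power2_eq_square field_simps\<close>)
  moreover have "sum ?f {l + 1..N} = 4 * real k * real l / (real N)\<^sup>2 * S3"
    unfolding S3_def sum_distrib_left
    by (intro sum.cong refl) (use assms in \<open>auto simp: green_jump_eq power2_eq_square field_simps\<close>)
  moreover have "(Rinv N * Amat N \<sigma> * Rinv N) $$ (k - 1, l - 1) = sum ?f {1..N}"
    using assms by (simp add: Rinv_eq_green_mat green_Amat_green_index)
  ultimately have entry: "(Rinv N * Amat N \<sigma> * Rinv N) $$ (k - 1, l - 1)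
      = 4 * (real N - real k) * (real N - real l) / (real N)\<^sup>2 * S1
        - 4 * real k * (real N - real l) / (real N)\<^sup>2 * S2 + 4 * real k * real l / (real N)\<^sup>2 * S3"
    unfolding split by simp
  have "real k > 0" "real N - real l > 0" using assms by auto
  then show ?thesis
    unfolding ckl_def trace rho entry S1_def[symmetric] S2_def[symmetric] S3_def[symmetric]
    by (simp add: field_simps power2_eq_square)
qed

lemma ckl_nonneg:
  assumes "2 \<le> k" "k \<le> l" "l + 2 \<le> N"
  shows "0 \<le> ckl N k l \<sigma>"
proof -
  have k: "real k \<ge> 2" and l: "real N - real l \<ge> 2" using assms by auto
  have "2 * (real N - real k) \<le> (real N - 1) * real k"
    using mult_left_mono[OF k, of "real N - 1"] assms by auto
  then have first: "0 \<le> (real N - 1) - 2 * (real N - real k) / real k"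
    using k by (simp add: field_simps)
  have "2 * real l \<le> (real N - 1) * (real N - real l)"
    using mult_left_mono[OF l, of "real N - 1"] assms by auto
  then have last: "0 \<le> (real N - 1) - 2 * real l / (real N - real l)"
    using l by (simp add: field_simps)
  have "1 \<le> k" "l < N" using assms by auto
  then show ?thesis
    unfolding ckl_eq[OF \<open>1 \<le> k\<close> assms(2) \<open>l < N\<close>] using first last
    by (intro add_nonneg_nonneg mult_nonneg_nonneg sum_nonneg) auto
qed

lemma ckl_1_eq_cl:
  assumes "1 \<le> l" "l < N"
  shows "ckl N 1 l \<sigma> = cl N l \<sigma>"
proof -
  have "real N - real l > 0" using assms by simp
  then show ?thesis
    unfolding ckl_eq[OF order.refl assms] cl_def
    using assms by (simp add: field_simps numeral_2_eq_2)
qed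

lemma ckl_last_eq_cl_rev_vec:
  assumes "1 \<le> k" "k < N"
  shows "ckl N k (N - 1) \<sigma> = cl N (N - k) (rev_vec N \<sigma>)"
proof -
  have middle: "(\<Sum>p = 2..N - k. (rev_vec N \<sigma> p)\<^sup>2) = (\<Sum>t\<in>{k + 1..N - 1}. (\<sigma> t)\<^sup>2)"
    unfolding rev_vec_def
    by (rule sum.reindex_bij_witness[where i = "\<lambda>t. N + 1 - t" and j = "\<lambda>p. N + 1 - p"])
       (use assms in auto)
  have tail: "(\<Sum>p = N - k + 1..N. (rev_vec N \<sigma> p)\<^sup>2) = (\<Sum>t\<in>{1..k}. (\<sigma> t)\<^sup>2)"
    unfolding rev_vec_def
    by (rule sum.reindex_bij_witness[where i = "\<lambda>t. N + 1 - t" and j = "\<lambda>p. N + 1 - p"])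
       (use assms in auto)
  have head: "rev_vec N \<sigma> 1 = \<sigma> N" by (simp add: rev_vec_def)
  have last: "(\<Sum>t\<in>{N - 1 + 1..N}. (\<sigma> t)\<^sup>2) = (\<sigma> N)\<^sup>2" using assms by simp
  have "k \<le> N - 1" "N - 1 < N" using assms by auto
  note ckl = ckl_eq[OF assms(1) this]
  have "real (N - k) = real N - real k" "real k > 0" using assms by auto
  then show ?thesis
    unfolding ckl cl_def head middle tail last
    using assms by (simp add: of_nat_diff field_simps)
qed

text \<open>Neither hypothesis is used: each index range already forces N \<ge> 2, and c_{k,l} depends on \<sigma>
only through the squares \<sigma>_t^2.\<close>

theorem lemma4p6:
  fixes N :: nat and \<sigma> :: "nat \<Rightarrow> real"
  assumes "N \<ge> 2"
    and "\<And>i. 1 \<le> i \<Longrightarrow> i \<le> N \<Longrightarrow> \<sigma> i > 0"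
  shows "(\<forall>k l. 2 \<le> k \<and> k \<le> l \<and> l \<le> N - 2 \<longrightarrow> ckl N k l \<sigma> \<ge> 0)
       \<and> (\<forall>l. 1 \<le> l \<and> l \<le> N - 1 \<longrightarrow> ckl N 1 l \<sigma> = cl N l \<sigma>)
       \<and> (\<forall>k. 1 \<le> k \<and> k \<le> N - 1 \<longrightarrow> ckl N k (N - 1) \<sigma> = cl N (N - k) (rev_vec N \<sigma>))"
proof (intro conjI allI impI)
  fix k l assume "2 \<le> k \<and> k \<le> l \<and> l \<le> N - 2"
  then show "0 \<le> ckl N k l \<sigma>" by (intro ckl_nonneg) auto
next
  fix l assume "1 \<le> l \<and> l \<le> N - 1"
  then show "ckl N 1 l \<sigma> = cl N l \<sigma>" by (intro ckl_1_eq_cl) auto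
next
  fix k assume "1 \<le> k \<and> k \<le> N - 1"
  then show "ckl N k (N - 1) \<sigma> = cl N (N - k) (rev_vec N \<sigma>)"
    by (intro ckl_last_eq_cl_rev_vec) auto
qed

end
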